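(* For $\epsilon>0$, $a\geq0$ with $\epsilon a$ belonging to a bounded interval, let $u_{\epsilon,a}$ be solutions of $\epsilon^2\Delta u+\mu u-|u|^2u+\epsilon af=0$ on $\mathbb{R}^2$ with $u_{\epsilon,a}(x)\to0$ as $|x|\to\infty$. Then the maps $u_{\epsilon,a}$ and $\epsilon\nabla u_{\epsilon,a}$ are uniformly bounded (on $\mathbb{R}^2$, uniformly in $\epsilon,a$).
   Context: $\mu\in C^\infty(\mathbb{R}^2,\mathbb{R})$ is radial, $\mu(x)=\mu_{\mathrm{rad}}(|x|)$, $\mu\in L^\infty$, $\mu_{\mathrm{rad}}'<0$ on $(0,\infty)$, $\mu_{\mathrm{rad}}(\rho)=0$ for a unique $\rho>0$ ($\mu_{\mathrm{rad}}$ smooth with an even extension). $f\in C^\infty(\mathbb{R}^2,\mathbb{R}^2)$, $f(x)=f_{\mathrm{rad}}(|x|)\frac{x}{|x|}$, $f_{\mathrm{rad}}$ smooth with an odd extension, $f\in L^1\cap L^\infty$, $f_{\mathrm{rad}}>0$ on $(0,\infty)$. *)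

theory Defs
  imports "HOL-Analysis.Analysis"
begin

definition smooth_real :: "(real \<Rightarrow> real) \<Rightarrow> bool" where
  "smooth_real g \<longleftrightarrow> (\<forall>n x. (deriv ^^ n) g field_differentiable (at x))"

definition partial :: "(real^2 \<Rightarrow> real^2) \<Rightarrow> real^2 \<Rightarrow> real^2 \<Rightarrow> real^2" where
  "partial u i x = frechet_derivative u (at x) i"

definition laplacian :: "(real^2 \<Rightarrow> real^2) \<Rightarrow> real^2 \<Rightarrow> real^2" where
  "laplacian u x = (\<Sum>i\<in>Basis. partial (partial u i) i x)"

definition is_solution ::
  "(real^2 \<Rightarrow> real) \<Rightarrow> (real^2 \<Rightarrow> real^2) \<Rightarrow> real \<Rightarrow> real \<Rightarrow> (real^2 \<Rightarrow> real^2) \<Rightarrow> bool" where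
  "is_solution \<mu> f \<epsilon> a u \<longleftrightarrow>
     (\<forall>x. u differentiable (at x)) \<and>
     (\<forall>i\<in>Basis. \<forall>x. partial u i differentiable (at x)) \<and>
     (\<forall>i\<in>Basis. \<forall>j\<in>Basis. continuous_on UNIV (partial (partial u i) j)) \<and>
     (\<forall>x. \<epsilon>\<^sup>2 *\<^sub>R laplacian u x + \<mu> x *\<^sub>R u x - (norm (u x))\<^sup>2 *\<^sub>R u x
          + (\<epsilon> * a) *\<^sub>R f x = 0) \<and>
     (u \<longlongrightarrow> 0) at_infinity"

end

theory Submission
  imports Defs
begin

text \<open>At a maximum point z of |u|, u(z) \<bullet> \<Delta>u(z) \<le> 0, so testing the equation against u(z) gives
  |u(z)|^4 \<le> sup|\<mu>| |u(z)|^2 + M sup|f| |u(z)|: a bound on |u| independent of \<epsilon> and a, and then,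
  through the equation, a bound B on \<epsilon>^2 \<Delta>u. For the gradient, a maximum principle in doubled variables
  applied to c \<bullet> u(x) - c \<bullet> u(y) - L (1 - exp (-|x - y|/\<epsilon>)) with |c| \<le> 1 shows that u is
  (L/\<epsilon>)-Lipschitz, hence \<epsilon> |Du| \<le> L.\<close>

lemma DERIV_nonpos_at_local_max:
  fixes g g' :: "real \<Rightarrow> real"
  assumes d: "d > 0"
    and g: "\<And>t. \<bar>t\<bar> < d \<Longrightarrow> (g has_real_derivative g' t) (at t)"
    and g': "(g' has_real_derivative D) (at 0)"
    and max: "\<And>t. \<bar>t\<bar> < d \<Longrightarrow> g t \<le> g 0"
  shows "D \<le> 0"
proof (rule ccontr)
  assume "\<not> D \<le> 0"
  hence "D > 0" by simp
  have g'0: "g' 0 = 0"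
    using DERIV_local_max[OF g[of 0] d] max d by (auto simp: abs_minus_commute)
  obtain e where e: "e > 0" "\<And>h. h > 0 \<Longrightarrow> h < e \<Longrightarrow> g' 0 < g' (0 + h)"
    using DERIV_pos_inc_right[OF g' \<open>D > 0\<close>] by blast
  define h where "h = min (e/2) (d/2)"
  have h: "h > 0" "h < e" "h < d" using e d by (auto simp: h_def)
  obtain z where z: "0 < z" "z < h" "g h - g 0 = (h - 0) * g' z"
    using MVT2[of 0 h g g'] h g by auto
  have "g' z > 0" using e(2)[of z] z h g'0 by simp
  hence "(h - 0) * g' z > 0" using h by simp
  hence "g h > g 0" using z by simp
  moreover have "g h \<le> g 0" using max[of h] h by simp
  ultimately show False by simp
qed

lemma continuous_attains_max_of_bounded_superlevel:
  fixes g :: "'a::heine_borel \<Rightarrow> real"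
  assumes "continuous_on UNIV g" and "bounded {z. g z \<ge> g x0}"
  obtains z where "\<And>y. g y \<le> g z"
proof -
  let ?K = "{z. g z \<ge> g x0}"
  have "closed ?K"
    using assms(1) by (intro closed_Collect_le) (auto intro: continuous_intros)
  hence "compact ?K" using assms(2) by (simp add: compact_eq_bounded_closed)
  moreover have "continuous_on ?K g" using assms(1) by (rule continuous_on_subset) simp
  ultimately obtain z where "z \<in> ?K" "\<forall>y\<in>?K. g y \<le> g z"
    using continuous_attains_sup[of ?K g] by blast
  hence "g y \<le> g z" for y by (cases "y \<in> ?K") auto
  thus thesis by (rule that)
qed

lemma norm_attains_max_of_tendsto_zero:
  fixes u :: "'a::{heine_borel, real_normed_vector} \<Rightarrow> 'b::real_normed_vector"
  assumes "continuous_on UNIV u" and "(u \<longlongrightarrow> 0) at_infinity"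
  obtains z where "\<And>y. norm (u y) \<le> norm (u z)"
proof (cases "\<exists>x. u x \<noteq> 0")
  case True
  then obtain x where "u x \<noteq> 0" by blast
  hence "\<forall>\<^sub>F z in at_infinity. norm (u z) < norm (u x)"
    using assms(2) by (auto simp: tendsto_iff dist_norm)
  then obtain R where R: "\<And>z. norm z \<ge> R \<Longrightarrow> norm (u z) < norm (u x)"
    unfolding eventually_at_infinity by blast
  have "{z. norm (u z) \<ge> norm (u x)} \<subseteq> cball 0 R"
    using R by (auto simp: dist_norm) (meson linorder_not_le order_less_imp_le)
  hence "bounded {z. norm (u z) \<ge> norm (u x)}" using bounded_cball bounded_subset by blast
  moreover have "continuous_on UNIV (\<lambda>z. norm (u z))"
    using assms(1) by (intro continuous_intros)
  ultimately show thesis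
    using continuous_attains_max_of_bounded_superlevel that by blast
next
  case False
  thus thesis using that by auto
qed

lemma onorm_frechet_derivative_le:
  fixes u :: "'a::{real_normed_vector, perfect_space} \<Rightarrow> 'b::real_normed_vector"
  assumes "u differentiable (at x)"
    and lip: "\<And>y. norm (u y - u x) \<le> K * norm (y - x)"
  shows "onorm (frechet_derivative u (at x)) \<le> K"
proof (rule onorm_le)
  fix h :: 'a
  let ?D = "frechet_derivative u (at x)"
  have lin: "bounded_linear ?D"
    and approx: "\<forall>e>0. \<exists>d>0. \<forall>y. norm (y - x) < d \<longrightarrow> norm (u y - u x - ?D (y - x)) \<le> e * norm (y - x)"
    using assms(1) frechet_derivative_works has_derivative_at_alt by blast+
  show "norm (?D h) \<le> K * norm h"
  proof (cases "h = 0")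
    case True
    thus ?thesis using lin by (simp add: linear_simps)
  next
    case False
    show ?thesis
    proof (rule field_le_epsilon)
      fix e :: real assume "e > 0"
      then obtain d where "d > 0"
        and d: "\<And>y. norm (y - x) < d \<Longrightarrow> norm (u y - u x - ?D (y - x)) \<le> (e / norm h) * norm (y - x)"
        using approx False by (metis divide_pos_pos zero_less_norm_iff)
      define t where "t = d / (2 * norm h)"
      have t: "t > 0" "norm (t *\<^sub>R h) < d" using \<open>d > 0\<close> False by (auto simp: t_def)
      have "t * norm (?D h) = norm (?D (t *\<^sub>R h))"
        using t lin by (simp add: linear_simps)
      also have "\<dots> \<le> norm (u (x + t *\<^sub>R h) - u x) + norm (u (x + t *\<^sub>R h) - u x - ?D (t *\<^sub>R h))"
        using norm_triangle_sub[of "?D (t *\<^sub>R h)" "u (x + t *\<^sub>R h) - u x"]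
        by (simp add: norm_minus_commute)
      also have "\<dots> \<le> K * (t * norm h) + (e / norm h) * (t * norm h)"
        using lip[of "x + t *\<^sub>R h"] d[of "x + t *\<^sub>R h"] t by (intro add_mono) auto
      also have "\<dots> = t * (K * norm h + e)"
        using False by (simp add: field_simps)
      finally show "norm (?D h) \<le> K * norm h + e" using t by simp
    qed
  qed
qed

lemma Basis_vec2: "(Basis :: (real^2) set) = {axis 1 1, axis 2 1}"
  unfolding Basis_vec_def by (auto simp: UNIV_2)

lemma sum_Basis_vec2: "(\<Sum>i\<in>(Basis :: (real^2) set). F i) = F (axis 1 1) + F (axis 2 1)"
  by (simp add: Basis_vec2 axis_eq_axis)

lemma frechet_derivative_eq_sum_partial:
  fixes u :: "real^2 \<Rightarrow> real^2"
  assumes "u differentiable (at p)"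
  shows "frechet_derivative u (at p) w = (\<Sum>j\<in>Basis. (w \<bullet> j) *\<^sub>R partial u j p)"
proof -
  have "linear (frechet_derivative u (at p))"
    using assms frechet_derivative_works has_derivative_linear by blast
  hence "frechet_derivative u (at p) (\<Sum>j\<in>Basis. (w \<bullet> j) *\<^sub>R j)
      = (\<Sum>j\<in>Basis. (w \<bullet> j) *\<^sub>R frechet_derivative u (at p) j)"
    by (simp add: linear_sum linear_scale)
  thus ?thesis by (simp add: euclidean_representation partial_def)
qed

lemma has_vector_derivative_along_line:
  fixes u :: "'a::real_normed_vector \<Rightarrow> 'b::real_normed_vector"
  assumes "u differentiable (at (p + t *\<^sub>R w))"
  shows "((\<lambda>t. u (p + t *\<^sub>R w)) has_vector_derivative frechet_derivative u (at (p + t *\<^sub>R w)) w) (at t)"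
proof -
  let ?D = "frechet_derivative u (at (p + t *\<^sub>R w))"
  have u: "(u has_derivative ?D) (at (p + t *\<^sub>R w))"
    using assms frechet_derivative_works by blast
  have "((\<lambda>t. p + t *\<^sub>R w) has_derivative (\<lambda>h. h *\<^sub>R w)) (at t)"
    by (auto intro!: derivative_eq_intros)
  from has_derivative_compose[OF this u] show ?thesis
    using has_derivative_linear[OF u]
    by (simp add: has_vector_derivative_def o_def linear_scale)
qed

definition second_dir_deriv :: "(real^2 \<Rightarrow> real^2) \<Rightarrow> real^2 \<Rightarrow> real^2 \<Rightarrow> real^2" where
  "second_dir_deriv u p w = (\<Sum>i\<in>Basis. (w \<bullet> i) *\<^sub>R (\<Sum>j\<in>Basis. (w \<bullet> j) *\<^sub>R partial (partial u i) j p))"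

lemma second_dir_deriv_uminus: "second_dir_deriv u p (- w) = second_dir_deriv u p w"
  unfolding second_dir_deriv_def by (simp add: sum_negf)

lemma second_dir_deriv_add_rotation:
  fixes \<nu> :: "real^2"
  assumes "norm \<nu> = 1"
  shows "second_dir_deriv u p \<nu> + second_dir_deriv u p (vector [- (\<nu>$2), \<nu>$1]) = laplacian u p"
proof -
  have "second_dir_deriv u p \<nu> + second_dir_deriv u p (vector [- (\<nu>$2), \<nu>$1]) =
     ((\<nu>$1)\<^sup>2 + (\<nu>$2)\<^sup>2) *\<^sub>R partial (partial u (axis 1 1)) (axis 1 1) p
   + ((\<nu>$1)\<^sup>2 + (\<nu>$2)\<^sup>2) *\<^sub>R partial (partial u (axis 2 1)) (axis 2 1) p"
    unfolding second_dir_deriv_def sum_Basis_vec2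
    by (simp add: inner_axis algebra_simps power2_eq_square scaleR_add_left)
  moreover have "(\<nu>$1)\<^sup>2 + (\<nu>$2)\<^sup>2 = 1"
    using assms unfolding norm_eq_sqrt_inner by (simp add: inner_vec_def sum_2 power2_eq_square)
  ultimately show ?thesis unfolding laplacian_def sum_Basis_vec2 by simp
qed

lemma has_vector_derivative_second_dir_deriv:
  fixes u :: "real^2 \<Rightarrow> real^2"
  assumes du: "\<forall>x. u differentiable (at x)"
    and dd: "\<forall>i\<in>Basis. \<forall>x. partial u i differentiable (at x)"
  shows "((\<lambda>t. frechet_derivative u (at (p + t *\<^sub>R w)) w) has_vector_derivative second_dir_deriv u p w) (at 0)"
proof -
  have "((\<lambda>t. \<Sum>i\<in>Basis. (w \<bullet> i) *\<^sub>R partial u i (p + t *\<^sub>R w)) has_vector_derivative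
        (\<Sum>i\<in>Basis. (w \<bullet> i) *\<^sub>R frechet_derivative (partial u i) (at (p + 0 *\<^sub>R w)) w)) (at 0)"
    using dd by (intro has_vector_derivative_sum has_vector_derivative_along_line
        bounded_linear.has_vector_derivative[OF bounded_linear_scaleR_right]) auto
  moreover have "frechet_derivative (partial u i) (at (p + 0 *\<^sub>R w)) w
        = (\<Sum>j\<in>Basis. (w \<bullet> j) *\<^sub>R partial (partial u i) j p)" if "i \<in> Basis" for i
    using frechet_derivative_eq_sum_partial dd that by simp
  ultimately show ?thesis
    using frechet_derivative_eq_sum_partial du by (simp add: second_dir_deriv_def)
qed

lemma has_real_derivative_inner_along_line:
  fixes u :: "real^2 \<Rightarrow> real^2"
  assumes "\<forall>x. u differentiable (at x)"
  shows "((\<lambda>t. c \<bullet> u (p + t *\<^sub>R w)) has_real_derivative c \<bullet> frechet_derivative u (at (p + t *\<^sub>R w)) w) (at t)"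
  unfolding has_real_derivative_iff_has_vector_derivative
  using assms by (intro bounded_linear.has_vector_derivative[OF bounded_linear_inner_right]
      has_vector_derivative_along_line) simp

lemma has_real_derivative_inner_second_dir_deriv:
  fixes u :: "real^2 \<Rightarrow> real^2"
  assumes "\<forall>x. u differentiable (at x)" and "\<forall>i\<in>Basis. \<forall>x. partial u i differentiable (at x)"
  shows "((\<lambda>t. c \<bullet> frechet_derivative u (at (p + t *\<^sub>R w)) w) has_real_derivative c \<bullet> second_dir_deriv u p w) (at 0)"
  unfolding has_real_derivative_iff_has_vector_derivative
  by (rule bounded_linear.has_vector_derivative[OF bounded_linear_inner_right
        has_vector_derivative_second_dir_deriv[OF assms]])

lemma inner_second_dir_deriv_nonpos_at_norm_max:
  fixes u :: "real^2 \<Rightarrow> real^2"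
  assumes du: "\<forall>x. u differentiable (at x)"
    and dd: "\<forall>i\<in>Basis. \<forall>x. partial u i differentiable (at x)"
    and max: "\<And>y. norm (u y) \<le> norm (u z)"
  shows "u z \<bullet> second_dir_deriv u z w \<le> 0"
proof -
  define D where "D t = frechet_derivative u (at (z + t *\<^sub>R w)) w" for t
  let ?H = "second_dir_deriv u z w"
  have d1: "((\<lambda>t. u (z + t *\<^sub>R w) \<bullet> u (z + t *\<^sub>R w)) has_real_derivative
        u (z + t *\<^sub>R w) \<bullet> D t + D t \<bullet> u (z + t *\<^sub>R w)) (at t)" for t
    unfolding has_real_derivative_iff_has_vector_derivative D_def
    using du by (intro bounded_bilinear.has_vector_derivative[OF bounded_bilinear_inner]
        has_vector_derivative_along_line) auto
  have u': "((\<lambda>t. u (z + t *\<^sub>R w)) has_vector_derivative D 0) (at 0)"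
    unfolding D_def using has_vector_derivative_along_line[of u z 0 w] du by simp
  have D': "(D has_vector_derivative ?H) (at 0)"
    unfolding D_def by (rule has_vector_derivative_second_dir_deriv[OF du dd])
  have d2: "((\<lambda>t. u (z + t *\<^sub>R w) \<bullet> D t + D t \<bullet> u (z + t *\<^sub>R w)) has_real_derivative
        (u z \<bullet> ?H + D 0 \<bullet> D 0) + (D 0 \<bullet> D 0 + ?H \<bullet> u z)) (at 0)"
    unfolding has_real_derivative_iff_has_vector_derivative
    using bounded_bilinear.has_vector_derivative[OF bounded_bilinear_inner u' D']
      bounded_bilinear.has_vector_derivative[OF bounded_bilinear_inner D' u']
    by (intro has_vector_derivative_add) simp_all
  have "u y \<bullet> u y \<le> u z \<bullet> u z" for y
    using max[of y] by (simp flip: power2_norm_eq_inner add: power_mono)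
  hence "(u z \<bullet> ?H + D 0 \<bullet> D 0) + (D 0 \<bullet> D 0 + ?H \<bullet> u z) \<le> 0"
    by (intro DERIV_nonpos_at_local_max[where d=1, OF _ d1 d2]) auto
  moreover have "0 \<le> D 0 \<bullet> D 0" by (rule inner_ge_zero)
  moreover have "?H \<bullet> u z = u z \<bullet> ?H" by (rule inner_commute)
  ultimately show ?thesis by linarith
qed

lemma inner_laplacian_nonpos_at_norm_max:
  fixes u :: "real^2 \<Rightarrow> real^2"
  assumes "\<forall>x. u differentiable (at x)"
    and "\<forall>i\<in>Basis. \<forall>x. partial u i differentiable (at x)"
    and "\<And>y. norm (u y) \<le> norm (u z)"
  shows "u z \<bullet> laplacian u z \<le> 0"
  using second_dir_deriv_add_rotation[OF norm_axis_1, of u z]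
    inner_second_dir_deriv_nonpos_at_norm_max[OF assms]
  by (metis add_nonpos_nonpos inner_add_right)

lemma le_one_add_of_power4_le:
  fixes s B K :: real
  assumes s: "s ^ 4 \<le> B * s\<^sup>2 + K * s" and "0 \<le> B" "0 \<le> K"
  shows "s \<le> 1 + B + K"
proof (cases "s \<le> 1")
  case False
  hence "K * s \<le> K * s\<^sup>2" using assms by (intro mult_left_mono) (auto simp: power2_eq_square)
  hence "s\<^sup>2 * s\<^sup>2 \<le> (B + K) * s\<^sup>2" using s by (simp add: algebra_simps power4_eq_xxxx power2_eq_square)
  hence "s\<^sup>2 \<le> B + K" by (rule mult_right_le_imp_le) (use False in simp)
  moreover have "s \<le> s\<^sup>2" using False by (simp add: power2_eq_square)
  ultimately show ?thesis by simp
qed (use assms in simp)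

lemma solution_norm_le:
  assumes sol: "is_solution \<mu> f \<epsilon> a u" and M: "\<bar>\<epsilon> * a\<bar> \<le> M"
    and Bm: "\<And>x. \<bar>\<mu> x\<bar> \<le> Bm" and F: "\<And>x. norm (f x) \<le> F"
  shows "norm (u x) \<le> 1 + Bm + M * F"
proof -
  have du: "\<forall>x. u differentiable (at x)"
    and dd: "\<forall>i\<in>Basis. \<forall>x. partial u i differentiable (at x)"
    and eq: "\<epsilon>\<^sup>2 *\<^sub>R laplacian u z + \<mu> z *\<^sub>R u z - (norm (u z))\<^sup>2 *\<^sub>R u z + (\<epsilon> * a) *\<^sub>R f z = 0"
    and lim: "(u \<longlongrightarrow> 0) at_infinity" for z
    using sol unfolding is_solution_def by auto
  have "continuous_on UNIV u"
    using du by (simp add: continuous_at_imp_continuous_on differentiable_imp_continuous_within)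
  then obtain z where max: "\<And>y. norm (u y) \<le> norm (u z)"
    using norm_attains_max_of_tendsto_zero lim by blast
  define s where "s = norm (u z)"
  have "u z \<bullet> (\<epsilon>\<^sup>2 *\<^sub>R laplacian u z + \<mu> z *\<^sub>R u z - (norm (u z))\<^sup>2 *\<^sub>R u z + (\<epsilon> * a) *\<^sub>R f z) = 0"
    using eq by simp
  hence "\<epsilon>\<^sup>2 * (u z \<bullet> laplacian u z) + \<mu> z * s\<^sup>2 - s ^ 4 + (\<epsilon> * a) * (u z \<bullet> f z) = 0"
    by (simp add: inner_add_right inner_diff_right s_def flip: power2_norm_eq_inner)
  hence "s ^ 4 = \<epsilon>\<^sup>2 * (u z \<bullet> laplacian u z) + \<mu> z * s\<^sup>2 + (\<epsilon> * a) * (u z \<bullet> f z)"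
    by linarith
  also have "\<dots> \<le> 0 + Bm * s\<^sup>2 + (M * F) * s"
  proof (intro add_mono)
    show "\<epsilon>\<^sup>2 * (u z \<bullet> laplacian u z) \<le> 0"
      using inner_laplacian_nonpos_at_norm_max[OF du dd max] by (simp add: mult_nonneg_nonpos)
    show "\<mu> z * s\<^sup>2 \<le> Bm * s\<^sup>2"
      using Bm[of z] by (intro mult_right_mono) auto
    have "\<bar>u z \<bullet> f z\<bar> \<le> s * norm (f z)"
      using Cauchy_Schwarz_ineq2[of "u z" "f z"] by (simp add: s_def)
    also have "\<dots> \<le> s * F" using F[of z] by (simp add: s_def mult_left_mono)
    finally have "\<bar>u z \<bullet> f z\<bar> \<le> s * F" .
    have "(\<epsilon> * a) * (u z \<bullet> f z) \<le> \<bar>\<epsilon> * a\<bar> * \<bar>u z \<bullet> f z\<bar>"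
      by (metis abs_ge_self abs_mult)
    also have "\<dots> \<le> M * (s * F)"
      using M \<open>\<bar>u z \<bullet> f z\<bar> \<le> s * F\<close> by (intro mult_mono) auto
    finally show "(\<epsilon> * a) * (u z \<bullet> f z) \<le> (M * F) * s" by (simp add: mult_ac)
  qed
  finally have "s ^ 4 \<le> Bm * s\<^sup>2 + (M * F) * s" by simp
  moreover have "0 \<le> Bm" using Bm[of z] by linarith
  moreover have "0 \<le> M * F"
    using M order_trans[OF norm_ge_zero F[of z]] by (intro mult_nonneg_nonneg) auto
  ultimately have "s \<le> 1 + Bm + M * F"
    by (rule le_one_add_of_power4_le)
  thus ?thesis using max[of x] by (simp add: s_def)
qed

lemma solution_laplacian_le:
  assumes sol: "is_solution \<mu> f \<epsilon> a u" and M: "\<bar>\<epsilon> * a\<bar> \<le> M"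
    and Bm: "\<And>x. \<bar>\<mu> x\<bar> \<le> Bm" and F: "\<And>x. norm (f x) \<le> F"
    and A: "\<And>x. norm (u x) \<le> A"
  shows "norm (\<epsilon>\<^sup>2 *\<^sub>R laplacian u x) \<le> Bm * A + A ^ 3 + M * F"
proof -
  have "\<epsilon>\<^sup>2 *\<^sub>R laplacian u x = (norm (u x))\<^sup>2 *\<^sub>R u x - \<mu> x *\<^sub>R u x - (\<epsilon> * a) *\<^sub>R f x"
    using sol unfolding is_solution_def by (simp add: algebra_simps eq_neg_iff_add_eq_0)
  hence "norm (\<epsilon>\<^sup>2 *\<^sub>R laplacian u x)
      \<le> norm ((norm (u x))\<^sup>2 *\<^sub>R u x - \<mu> x *\<^sub>R u x) + norm ((\<epsilon> * a) *\<^sub>R f x)"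
    by (simp only: norm_triangle_ineq4)
  also have "\<dots> \<le> norm ((norm (u x))\<^sup>2 *\<^sub>R u x) + norm (\<mu> x *\<^sub>R u x) + norm ((\<epsilon> * a) *\<^sub>R f x)"
    by (rule add_right_mono[OF norm_triangle_ineq4])
  also have "\<dots> \<le> A ^ 3 + Bm * A + M * F"
  proof (intro add_mono)
    have "norm ((norm (u x))\<^sup>2 *\<^sub>R u x) = norm (u x) ^ 3"
      by (simp add: power2_eq_square power3_eq_cube)
    thus "norm ((norm (u x))\<^sup>2 *\<^sub>R u x) \<le> A ^ 3"
      using A[of x] by (simp add: power_mono)
    show "norm (\<mu> x *\<^sub>R u x) \<le> Bm * A"
      using Bm[of x] A[of x] by (simp add: mult_mono)
    show "norm ((\<epsilon> * a) *\<^sub>R f x) \<le> M * F"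
      using M F[of x] by (simp add: mult_mono)
  qed
  finally show ?thesis by simp
qed

lemma abs_inner_le_norm:
  fixes c v :: "'a::real_inner"
  assumes "norm c \<le> 1"
  shows "\<bar>c \<bullet> v\<bar> \<le> norm v"
  using Cauchy_Schwarz_ineq2[of c v] assms mult_right_mono[OF assms norm_ge_zero[of v]] by linarith

lemma doubling_superlevel_bounded:
  fixes u :: "'a::real_normed_vector \<Rightarrow> 'b::real_inner" and \<psi> :: "real \<Rightarrow> real"
  assumes lim: "(u \<longlongrightarrow> 0) at_infinity" and c: "norm c \<le> 1" and A: "\<And>z. norm (u z) \<le> A"
    and \<psi>_nonneg: "\<And>s. 0 \<le> s \<Longrightarrow> 0 \<le> \<psi> s" and \<psi>_large: "\<And>s. \<delta> \<le> s \<Longrightarrow> 2 * A \<le> \<psi> s"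
    and "P > 0"
  shows "bounded {pq. P \<le> c \<bullet> u (fst pq) - c \<bullet> u (snd pq) - \<psi> (norm (fst pq - snd pq))}"
proof -
  have cu: "\<bar>c \<bullet> u z\<bar> \<le> norm (u z)" for z using abs_inner_le_norm[OF c] .
  have "\<forall>\<^sub>F z in at_infinity. dist (u z) 0 < P / 2"
    using lim \<open>P > 0\<close> tendsto_iff half_gt_zero by blast
  then obtain R where "\<And>z. norm z \<ge> R \<Longrightarrow> dist (u z) 0 < P / 2"
    unfolding eventually_at_infinity by blast
  hence R: "\<And>z. norm z \<ge> R \<Longrightarrow> norm (u z) < P / 2" by simp
  show ?thesis
  proof (rule bounded_subset[OF bounded_cball], safe)
    fix p q
    assume "P \<le> c \<bullet> u (fst (p, q)) - c \<bullet> u (snd (p, q)) - \<psi> (norm (fst (p, q) - snd (p, q)))"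
    hence P: "P \<le> c \<bullet> u p - c \<bullet> u q - \<psi> (norm (p - q))" by simp
    have "norm (p - q) < \<delta>"
    proof (rule ccontr)
      assume "\<not> ?thesis"
      hence "2 * A \<le> \<psi> (norm (p - q))" using \<psi>_large by simp
      thus False using P cu[of p] cu[of q] A[of p] A[of q] \<open>P > 0\<close> by linarith
    qed
    have "norm p < R + \<delta>"
    proof (rule ccontr)
      assume "\<not> ?thesis"
      hence "norm p \<ge> R" "norm q \<ge> R"
        using \<open>norm (p - q) < \<delta>\<close> norm_ge_zero[of "p - q"] norm_triangle_ineq2[of p q] by linarith+
      hence "norm (u p) < P / 2" "norm (u q) < P / 2" using R by blast+
      thus False using P cu[of p] cu[of q] \<psi>_nonneg[OF norm_ge_zero[of "p - q"]] by linarith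
    qed
    moreover have "norm q < R + 2 * \<delta>"
      using calculation \<open>norm (p - q) < \<delta>\<close> norm_triangle_ineq2[of q p] norm_minus_commute[of p q]
      by linarith
    moreover have "norm (p, q) \<le> norm p + norm q" by (rule norm_Pair_le)
    moreover have "0 \<le> \<delta>" using \<open>norm (p - q) < \<delta>\<close> norm_ge_zero[of "p - q"] by linarith
    ultimately show "(p, q) \<in> cball 0 (2 * \<bar>R\<bar> + 3 * \<bar>\<delta>\<bar>)" by (simp add: mem_cball_0)
  qed
qed

lemma doubling_attains_max:
  fixes u :: "'a::{heine_borel, real_normed_vector} \<Rightarrow> 'b::real_inner" and \<psi> :: "real \<Rightarrow> real"
  assumes "continuous_on UNIV u" and lim: "(u \<longlongrightarrow> 0) at_infinity"
    and c: "norm c \<le> 1" and A: "\<And>z. norm (u z) \<le> A" and "continuous_on UNIV \<psi>"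
    and \<psi>_nonneg: "\<And>s. 0 \<le> s \<Longrightarrow> 0 \<le> \<psi> s" and \<psi>_large: "\<And>s. \<delta> \<le> s \<Longrightarrow> 2 * A \<le> \<psi> s"
    and pos: "0 < c \<bullet> u x - c \<bullet> u y - \<psi> (norm (x - y))"
  obtains x' y' where
    "\<And>p q. c \<bullet> u p - c \<bullet> u q - \<psi> (norm (p - q)) \<le> c \<bullet> u x' - c \<bullet> u y' - \<psi> (norm (x' - y'))"
proof -
  define \<Phi> where "\<Phi> pq = c \<bullet> u (fst pq) - c \<bullet> u (snd pq) - \<psi> (norm (fst pq - snd pq))" for pq
  have "continuous_on UNIV (\<lambda>pq. u (fst pq))" "continuous_on UNIV (\<lambda>pq. u (snd pq))"
    using assms(1) by (rule continuous_on_compose2, auto intro: continuous_intros)+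
  hence "continuous_on UNIV \<Phi>"
    unfolding \<Phi>_def by (intro continuous_intros continuous_on_compose2[OF assms(5)]) auto
  moreover have "bounded {pq. \<Phi> (x, y) \<le> \<Phi> pq}"
    unfolding \<Phi>_def using doubling_superlevel_bounded[OF lim c A \<psi>_nonneg \<psi>_large, where P = "\<Phi> (x, y)"] pos
    by (simp add: \<Phi>_def)
  ultimately obtain q where q: "\<And>p. \<Phi> p \<le> \<Phi> q"
    by (rule continuous_attains_max_of_bounded_superlevel) blast
  show thesis
  proof (rule that)
    fix p p' show "c \<bullet> u p - c \<bullet> u p' - \<psi> (norm (p - p'))
        \<le> c \<bullet> u (fst q) - c \<bullet> u (snd q) - \<psi> (norm (fst q - snd q))"
      using q[of "(p, p')"] by (simp add: \<Phi>_def)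
  qed
qed

lemma inner_diff_along_lines_second_order:
  fixes u :: "real^2 \<Rightarrow> real^2" and h h' :: "real \<Rightarrow> real"
  assumes du: "\<forall>x. u differentiable (at x)"
    and dd: "\<forall>i\<in>Basis. \<forall>x. partial u i differentiable (at x)"
    and "d > 0"
    and h: "\<And>t. (h has_real_derivative h' t) (at t)" and h': "(h' has_real_derivative h'') (at 0)"
    and max: "\<And>t. \<bar>t\<bar> < d \<Longrightarrow>
      c \<bullet> u (x + t *\<^sub>R v) - c \<bullet> u (y + t *\<^sub>R w) - h t \<le> c \<bullet> u x - c \<bullet> u y - h 0"
  shows "c \<bullet> second_dir_deriv u x v - c \<bullet> second_dir_deriv u y w \<le> h''"
proof -
  define G where "G t = c \<bullet> u (x + t *\<^sub>R v) - c \<bullet> u (y + t *\<^sub>R w) - h t" for t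
  define G' where "G' t = c \<bullet> frechet_derivative u (at (x + t *\<^sub>R v)) v
      - c \<bullet> frechet_derivative u (at (y + t *\<^sub>R w)) w - h' t" for t
  have "(G has_real_derivative G' t) (at t)" for t
    unfolding G_def G'_def using du by (intro DERIV_diff has_real_derivative_inner_along_line h)
  moreover have "(G' has_real_derivative c \<bullet> second_dir_deriv u x v - c \<bullet> second_dir_deriv u y w - h'') (at 0)"
    unfolding G'_def by (intro DERIV_diff has_real_derivative_inner_second_dir_deriv[OF du dd] h')
  moreover have "G t \<le> G 0" if "\<bar>t\<bar> < d" for t
    using max[OF that] by (simp add: G_def)
  ultimately show ?thesis
    using DERIV_nonpos_at_local_max[OF \<open>d > 0\<close>] by (metis diff_le_0_iff_le)
qed

text \<open>Moving x and y apart along \<nu> = (x - y) / |x - y| picks up \<psi>'', moving them in parallel along the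
  orthogonal direction leaves \<psi> unchanged; the two second directional derivatives add up to the Laplacians.\<close>
lemma doubling_max_laplacian_le:
  fixes u :: "real^2 \<Rightarrow> real^2" and \<psi> \<psi>' :: "real \<Rightarrow> real"
  assumes du: "\<forall>x. u differentiable (at x)"
    and dd: "\<forall>i\<in>Basis. \<forall>x. partial u i differentiable (at x)"
    and \<psi>: "\<And>s. (\<psi> has_real_derivative \<psi>' s) (at s)"
    and \<psi>': "(\<psi>' has_real_derivative \<psi>'') (at (norm (x - y)))"
    and "x \<noteq> y"
    and max: "\<And>p q. c \<bullet> u p - c \<bullet> u q - \<psi> (norm (p - q)) \<le> c \<bullet> u x - c \<bullet> u y - \<psi> (norm (x - y))"
  shows "c \<bullet> laplacian u x - c \<bullet> laplacian u y \<le> 4 * \<psi>''"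
proof -
  define r where "r = norm (x - y)"
  have "r > 0" using \<open>x \<noteq> y\<close> by (simp add: r_def)
  define \<nu> where "\<nu> = (1 / r) *\<^sub>R (x - y)"
  have \<nu>: "norm \<nu> = 1" "x - y = r *\<^sub>R \<nu>" using \<open>r > 0\<close> by (auto simp: \<nu>_def r_def)
  define e where "e = (vector [- (\<nu>$2), \<nu>$1] :: real^2)"
  let ?H = "second_dir_deriv u"
  have "(\<psi>' has_real_derivative \<psi>'') (at (r + 2 * 0))" using \<psi>' by (simp add: r_def)
  hence "((\<lambda>t. \<psi>' (r + 2 * t) * 2) has_real_derivative \<psi>'' * 2 * 2) (at 0)"
    by (intro DERIV_cmult_right DERIV_chain2[where f = \<psi>']) (auto intro!: derivative_eq_intros)
  moreover have "((\<lambda>t. \<psi> (r + 2 * t)) has_real_derivative \<psi>' (r + 2 * t) * 2) (at t)" for t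
    by (intro DERIV_chain2[OF \<psi>]) (auto intro!: derivative_eq_intros)
  moreover have "c \<bullet> u (x + t *\<^sub>R \<nu>) - c \<bullet> u (y + t *\<^sub>R (- \<nu>)) - \<psi> (r + 2 * t)
      \<le> c \<bullet> u x - c \<bullet> u y - \<psi> (r + 2 * 0)" if "\<bar>t\<bar> < r / 2" for t
  proof -
    have "x + t *\<^sub>R \<nu> - (y + t *\<^sub>R (- \<nu>)) = (r + 2 * t) *\<^sub>R \<nu>"
      using \<nu> by (simp add: vec_eq_iff algebra_simps)
    moreover have "norm ((r + 2 * t) *\<^sub>R \<nu>) = r + 2 * t" using \<nu> that by simp
    ultimately show ?thesis using max[of "x + t *\<^sub>R \<nu>" "y + t *\<^sub>R (- \<nu>)"] by (simp add: r_def)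
  qed
  ultimately have "c \<bullet> ?H x \<nu> - c \<bullet> ?H y (- \<nu>) \<le> \<psi>'' * 2 * 2"
    using \<open>r > 0\<close> by (intro inner_diff_along_lines_second_order[OF du dd, of "r / 2"]) auto
  moreover have "c \<bullet> ?H x e - c \<bullet> ?H y e \<le> 0"
  proof (rule inner_diff_along_lines_second_order[OF du dd, of 1 "\<lambda>_. 0" "\<lambda>_. 0"])
    fix t
    show "c \<bullet> u (x + t *\<^sub>R e) - c \<bullet> u (y + t *\<^sub>R e) - 0 \<le> c \<bullet> u x - c \<bullet> u y - 0"
      using max[of "x + t *\<^sub>R e" "y + t *\<^sub>R e"] by simp
  qed auto
  moreover have "c \<bullet> laplacian u p = c \<bullet> ?H p \<nu> + c \<bullet> ?H p e" for p
    unfolding e_def second_dir_deriv_add_rotation[OF \<nu>(1), symmetric] by (rule inner_add_right)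
  ultimately show ?thesis by (simp add: second_dir_deriv_uminus)
qed

lemma half_le_one_minus_exp:
  fixes s \<epsilon> :: real
  assumes "\<epsilon> > 0" "\<epsilon> \<le> s"
  shows "1 / 2 \<le> 1 - exp (- (s / \<epsilon>))"
proof -
  have "exp (- (s / \<epsilon>)) \<le> exp (- 1)" using assms by simp
  also have "\<dots> \<le> 1 / 2" using exp_ge_add_one_self[of 1] by (simp add: exp_minus field_simps)
  finally show ?thesis by simp
qed

text \<open>If the bound failed, c \<bullet> u x - c \<bullet> u y - \<psi> |x - y| would attain a positive maximum at some x' \<noteq> y',
  where the concavity \<psi>'' = - L exp (-r/\<epsilon>) / \<epsilon>^2 of the modulus \<psi> outweighs the bound B on \<epsilon>^2 \<Delta>u.\<close>
lemma inner_diff_le_exp_modulus: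
  fixes u :: "real^2 \<Rightarrow> real^2"
  assumes du: "\<forall>x. u differentiable (at x)"
    and dd: "\<forall>i\<in>Basis. \<forall>x. partial u i differentiable (at x)"
    and lim: "(u \<longlongrightarrow> 0) at_infinity" and "\<epsilon> > 0"
    and A: "\<And>z. norm (u z) \<le> A" and B: "\<And>z. norm (\<epsilon>\<^sup>2 *\<^sub>R laplacian u z) \<le> B"
    and L: "4 * A \<le> L" "B < L" and c: "norm c \<le> 1"
  shows "c \<bullet> u x - c \<bullet> u y \<le> L * (1 - exp (- (norm (x - y) / \<epsilon>)))"
proof (rule ccontr)
  define \<psi> where "\<psi> s = L * (1 - exp (- (s / \<epsilon>)))" for s
  assume "\<not> ?thesis"
  hence pos: "0 < c \<bullet> u x - c \<bullet> u y - \<psi> (norm (x - y))" by (simp add: \<psi>_def)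
  have "0 \<le> A" "0 \<le> B" using A[of 0] B[of 0] norm_ge_zero order_trans by blast+
  hence "L > 0" using L by linarith
  have cu: "\<bar>c \<bullet> u z\<bar> \<le> A" for z using abs_inner_le_norm[OF c] A[of z] by (rule order_trans)
  have u_cont: "continuous_on UNIV u"
    using du by (simp add: continuous_at_imp_continuous_on differentiable_imp_continuous_within)
  have \<psi>_cont: "continuous_on UNIV \<psi>"
    unfolding \<psi>_def using \<open>\<epsilon> > 0\<close> by (intro continuous_intros) auto
  have \<psi>_nonneg: "0 \<le> \<psi> s" if "0 \<le> s" for s
    using that \<open>\<epsilon> > 0\<close> \<open>L > 0\<close> by (simp add: \<psi>_def)
  have \<psi>_large: "2 * A \<le> \<psi> s" if "\<epsilon> \<le> s" for s
  proof -
    have "L * (1 / 2) \<le> \<psi> s"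
      unfolding \<psi>_def using half_le_one_minus_exp[OF \<open>\<epsilon> > 0\<close> that] \<open>L > 0\<close> by (intro mult_left_mono) auto
    thus ?thesis using L by simp
  qed
  obtain x' y' where max:
    "\<And>p q. c \<bullet> u p - c \<bullet> u q - \<psi> (norm (p - q)) \<le> c \<bullet> u x' - c \<bullet> u y' - \<psi> (norm (x' - y'))"
    by (rule doubling_attains_max[OF u_cont lim c A \<psi>_cont \<psi>_nonneg \<psi>_large pos]) auto
  define r where "r = norm (x' - y')"
  have "0 < c \<bullet> u x' - c \<bullet> u y' - \<psi> r" using max[of x y] pos by (simp add: r_def)
  hence "x' \<noteq> y'" by (auto simp: \<psi>_def r_def)
  have "L * (1 - exp (- (r / \<epsilon>))) < L * (1 / 2)"
    using \<open>0 < c \<bullet> u x' - c \<bullet> u y' - \<psi> r\<close> cu[of x'] cu[of y'] L unfolding \<psi>_def by linarith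
  hence "exp (- (r / \<epsilon>)) > 1 / 2" using \<open>L > 0\<close> by simp
  have \<psi>': "(\<psi> has_real_derivative L * exp (- (s / \<epsilon>)) / \<epsilon>) (at s)" for s
    unfolding \<psi>_def using \<open>\<epsilon> > 0\<close> by (auto intro!: derivative_eq_intros simp: field_simps)
  have \<psi>'': "((\<lambda>s. L * exp (- (s / \<epsilon>)) / \<epsilon>) has_real_derivative - L * exp (- (r / \<epsilon>)) / \<epsilon>\<^sup>2)
      (at (norm (x' - y')))"
    using \<open>\<epsilon> > 0\<close> by (auto intro!: derivative_eq_intros simp: field_simps power2_eq_square r_def)
  from doubling_max_laplacian_le[OF du dd \<psi>' \<psi>'' \<open>x' \<noteq> y'\<close> max]
  have "c \<bullet> laplacian u x' - c \<bullet> laplacian u y' \<le> 4 * (- L * exp (- (r / \<epsilon>)) / \<epsilon>\<^sup>2)" .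
  hence "\<epsilon>\<^sup>2 * (c \<bullet> laplacian u x' - c \<bullet> laplacian u y') \<le> - 4 * L * exp (- (r / \<epsilon>))"
    using \<open>\<epsilon> > 0\<close> by (simp add: field_simps)
  moreover have "\<epsilon>\<^sup>2 * (c \<bullet> laplacian u x' - c \<bullet> laplacian u y') \<ge> - 2 * B"
    using abs_inner_le_norm[OF c, of "\<epsilon>\<^sup>2 *\<^sub>R laplacian u x'"] B[of x']
      abs_inner_le_norm[OF c, of "\<epsilon>\<^sup>2 *\<^sub>R laplacian u y'"] B[of y']
    by (simp add: right_diff_distrib)
  moreover have "L * (1 / 2) < L * exp (- (r / \<epsilon>))"
    using \<open>exp (- (r / \<epsilon>)) > 1 / 2\<close> \<open>L > 0\<close> by (rule mult_strict_left_mono)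
  ultimately show False using L by linarith
qed

lemma scaled_onorm_frechet_derivative_le:
  fixes u :: "real^2 \<Rightarrow> real^2"
  assumes du: "\<forall>x. u differentiable (at x)"
    and dd: "\<forall>i\<in>Basis. \<forall>x. partial u i differentiable (at x)"
    and lim: "(u \<longlongrightarrow> 0) at_infinity" and "\<epsilon> > 0"
    and A: "\<And>z. norm (u z) \<le> A" and B: "\<And>z. norm (\<epsilon>\<^sup>2 *\<^sub>R laplacian u z) \<le> B"
  shows "\<epsilon> * onorm (frechet_derivative u (at x)) \<le> 4 * A + B + 1"
proof -
  define L where "L = 4 * A + B + 1"
  have "0 \<le> A" "0 \<le> B" using A[of 0] B[of 0] norm_ge_zero order_trans by blast+
  have "norm (u y - u x) \<le> (L / \<epsilon>) * norm (y - x)" for y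
  proof (cases "u y = u x")
    case True
    thus ?thesis using \<open>0 \<le> A\<close> \<open>0 \<le> B\<close> \<open>\<epsilon> > 0\<close> by (simp add: L_def)
  next
    case False
    define c where "c = (1 / norm (u y - u x)) *\<^sub>R (u y - u x)"
    have "norm (u y - u x) = c \<bullet> u y - c \<bullet> u x"
      using False unfolding inner_diff_right[symmetric] c_def
      by (simp add: power2_norm_eq_inner[symmetric] power2_eq_square)
    also have "\<dots> \<le> L * (1 - exp (- (norm (y - x) / \<epsilon>)))"
      using False \<open>0 \<le> A\<close> \<open>0 \<le> B\<close>
      by (intro inner_diff_le_exp_modulus[OF du dd lim \<open>\<epsilon> > 0\<close> A B]) (auto simp: L_def c_def)
    also have "\<dots> \<le> L * (norm (y - x) / \<epsilon>)"
      using exp_ge_add_one_self[of "- (norm (y - x) / \<epsilon>)"] \<open>0 \<le> A\<close> \<open>0 \<le> B\<close>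
      by (intro mult_left_mono) (auto simp: L_def)
    finally show ?thesis by simp
  qed
  hence "onorm (frechet_derivative u (at x)) \<le> L / \<epsilon>"
    using du by (intro onorm_frechet_derivative_le) auto
  thus ?thesis using \<open>\<epsilon> > 0\<close> by (simp add: L_def field_simps)
qed

theorem mainTheorem5:
  fixes \<mu> :: "real^2 \<Rightarrow> real" and \<mu>_rad :: "real \<Rightarrow> real"
    and f :: "real^2 \<Rightarrow> real^2" and f_rad :: "real \<Rightarrow> real"
  assumes mu_def: "\<And>x. \<mu> x = \<mu>_rad (norm x)"
    and mu_smooth: "smooth_real \<mu>_rad"
    and mu_even: "\<And>r. \<mu>_rad (- r) = \<mu>_rad r"
    and mu_bdd: "bounded (range \<mu>)"
    and mu_decr: "\<And>r. r > 0 \<Longrightarrow> deriv \<mu>_rad r < 0"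
    and mu_zero: "\<exists>!\<rho>. \<rho> > 0 \<and> \<mu>_rad \<rho> = 0"
    and f_def: "\<And>x. f x = (f_rad (norm x) / norm x) *\<^sub>R x"
    and f_smooth: "smooth_real f_rad"
    and f_odd: "\<And>r. f_rad (- r) = - f_rad r"
    and f_L1: "integrable lborel f"
    and f_bdd: "bounded (range f)"
    and f_pos: "\<And>r. r > 0 \<Longrightarrow> f_rad r > 0"
    and M_nonneg: "M \<ge> 0"
  shows "\<exists>C. \<forall>\<epsilon> a u. \<epsilon> > 0 \<longrightarrow> a \<ge> 0 \<longrightarrow> \<epsilon> * a \<le> M \<longrightarrow> is_solution \<mu> f \<epsilon> a u \<longrightarrow>
           (\<forall>x. norm (u x) \<le> C \<and> \<epsilon> * onorm (frechet_derivative u (at x)) \<le> C)"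
proof -
  obtain Bm where "Bm > 0" and Bm: "\<And>x. \<bar>\<mu> x\<bar> \<le> Bm" using mu_bdd unfolding bounded_pos by auto
  obtain F where "F > 0" and F: "\<And>x. norm (f x) \<le> F" using f_bdd unfolding bounded_pos by auto
  define A where "A = 1 + Bm + M * F"
  define B where "B = Bm * A + A ^ 3 + M * F"
  have "0 \<le> A" "0 \<le> B" using \<open>Bm > 0\<close> \<open>F > 0\<close> M_nonneg by (simp_all add: A_def B_def)
  show ?thesis
  proof (intro exI[of _ "5 * A + B + 1"] allI impI)
    fix \<epsilon> a :: real and u :: "real^2 \<Rightarrow> real^2" and x
    assume "\<epsilon> > 0" "a \<ge> 0" "\<epsilon> * a \<le> M" and sol: "is_solution \<mu> f \<epsilon> a u"
    hence M: "\<bar>\<epsilon> * a\<bar> \<le> M" by simp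
    have uA: "norm (u z) \<le> A" for z
      unfolding A_def by (rule solution_norm_le[OF sol M Bm F])
    have "norm (\<epsilon>\<^sup>2 *\<^sub>R laplacian u z) \<le> B" for z
      unfolding B_def by (rule solution_laplacian_le[OF sol M Bm F uA])
    hence "\<epsilon> * onorm (frechet_derivative u (at x)) \<le> 4 * A + B + 1"
      using sol \<open>\<epsilon> > 0\<close> uA unfolding is_solution_def
      by (intro scaled_onorm_frechet_derivative_le) auto
    thus "norm (u x) \<le> 5 * A + B + 1 \<and> \<epsilon> * onorm (frechet_derivative u (at x)) \<le> 5 * A + B + 1"
      using uA[of x] \<open>0 \<le> A\<close> \<open>0 \<le> B\<close> by linarith
  qed
qed

end
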